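(* Let $q=2^t$. The $\mathbb{F}_2$-span of $\{\chi_\ell:\ell\in X_0\}\cup Z$ equals the $\mathbb{F}_2$-span of $\{\chi_\ell:\ell\in X_0\cup L_1\}$.
   Context: Let $q$ be a prime power and $V$ a $4$-dimensional vector space over $\mathbb{F}_q$ with a nonsingular alternating bilinear form and symplectic basis $e_0,e_1,e_2,e_3$ with $(e_0,e_3)=(e_1,e_2)=1$. $P$ is the set of $1$-dimensional subspaces of $V$ (points), $L$ the set of totally isotropic $2$-dimensional subspaces (lines). $p_0=\langle e_0\rangle$, $\ell_0=\langle e_0,e_1\rangle$; $P_1$ is the set of points $(a:b:c:d)$ with $d\ne0$; $L_1$ is the set of lines sharing no point with $\ell_0$. $\mathbb{F}_2[P]$ is the space of functions $P\to\mathbb{F}_2$, $\chi_\ell$ the characteristic function of a line $\ell$; $C(P,L_1)$ is the span of $\{\chi_\ell:\ell\in L_1\}$ in $\mathbb{F}_2[P]$, $\pi_{P_1}:\mathbb{F}_2[P]\to\mathbb{F}_2[P_1]$ is restriction to $P_1$, and $C(P_1,L_1)=\pi_{P_1}(C(P,L_1))$. $X_0$ is the set of the $q$ lines through $p_0$ other than $\ell_0$. $Z\subset\{\chi_\ell:\ell\in L_1\}$ is any set of characteristic functions of lines of $L_1$ which $\pi_{P_1}$ maps bijectively onto a basis of $C(P_1,L_1)$. *)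

theory Defs
  imports "HOL-Analysis.Finite_Cartesian_Product" "HOL-Library.Z2"
begin

text \<open>V = F_q^4, coordinates indexed 0,1,2,3 (a:b:c:d).
  Alternating form with (e0,e3) = (e1,e2) = 1.\<close>

definition sform :: "'a::field ^ 4 \<Rightarrow> 'a ^ 4 \<Rightarrow> 'a" where
  "sform x y = x$0 * y$3 - x$3 * y$0 + x$1 * y$2 - x$2 * y$1"

definition ebasis :: "4 \<Rightarrow> 'a::field ^ 4" where
  "ebasis i = (\<chi> j. if j = i then 1 else 0)"

definition span1 :: "'a::field ^ 4 \<Rightarrow> ('a ^ 4) set" where
  "span1 v = {c *s v | c. True}"

definition span2 :: "'a::field ^ 4 \<Rightarrow> 'a ^ 4 \<Rightarrow> ('a ^ 4) set" where
  "span2 u v = {a *s u + b *s v | a b. True}"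

definition lin_indep2 :: "'a::field ^ 4 \<Rightarrow> 'a ^ 4 \<Rightarrow> bool" where
  "lin_indep2 u v \<longleftrightarrow> (\<forall>a b. a *s u + b *s v = 0 \<longrightarrow> a = 0 \<and> b = 0)"

definition points :: "('a::{field,finite} ^ 4) set set" where
  "points = {span1 v | v. v \<noteq> 0}"

definition lines :: "('a::{field,finite} ^ 4) set set" where
  "lines = {span2 u v | u v. lin_indep2 u v \<and> sform u v = 0}"

definition p0 :: "('a::{field,finite} ^ 4) set" where
  "p0 = span1 (ebasis 0)"

definition l0 :: "('a::{field,finite} ^ 4) set" where
  "l0 = span2 (ebasis 0) (ebasis 1)"

definition P1 :: "('a::{field,finite} ^ 4) set set" where
  "P1 = {span1 v | v. v $ 3 \<noteq> 0}"

definition L1 :: "('a::{field,finite} ^ 4) set set" where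
  "L1 = {l \<in> lines. \<not> (\<exists>p\<in>points. p \<subseteq> l \<and> p \<subseteq> l0)}"

definition X0 :: "('a::{field,finite} ^ 4) set set" where
  "X0 = {l \<in> lines. p0 \<subseteq> l \<and> l \<noteq> l0}"

text \<open>Elements of F_2[P] are functions P \<rightarrow> F_2, represented as functions on
  subsets of V vanishing outside P.\<close>
definition chi :: "('a::{field,finite} ^ 4) set \<Rightarrow> ('a ^ 4) set \<Rightarrow> bit" where
  "chi l = (\<lambda>p. if p \<in> points \<and> p \<subseteq> l then 1 else 0)"

definition piP1 :: "(('a::{field,finite} ^ 4) set \<Rightarrow> bit) \<Rightarrow> ('a ^ 4) set \<Rightarrow> bit" where
  "piP1 f = (\<lambda>p. if p \<in> P1 then f p else 0)"

definition F2span :: "('b \<Rightarrow> bit) set \<Rightarrow> ('b \<Rightarrow> bit) set" where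
  "F2span S = {f. \<exists>T c. finite T \<and> T \<subseteq> S \<and> f = (\<lambda>x. \<Sum>g\<in>T. c g * g x)}"

definition F2indep :: "('b \<Rightarrow> bit) set \<Rightarrow> bool" where
  "F2indep S \<longleftrightarrow> (\<forall>T c. finite T \<and> T \<subseteq> S \<and> (\<lambda>x. \<Sum>g\<in>T. c g * g x) = (\<lambda>x. 0)
      \<longrightarrow> (\<forall>g\<in>T. c g = 0))"

definition F2basis :: "('b \<Rightarrow> bit) set \<Rightarrow> ('b \<Rightarrow> bit) set \<Rightarrow> bool" where
  "F2basis B W \<longleftrightarrow> B \<subseteq> W \<and> F2indep B \<and> F2span B = W"

definition CP1L1 :: "(('a::{field,finite} ^ 4) set \<Rightarrow> bit) set" where
  "CP1L1 = piP1 ` F2span (chi ` L1)"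

end

theory Submission
  imports Defs
begin

text \<open>
  Write \<open>\<pi>\<close> for restriction to \<open>P\<^sub>1\<close>. Since \<open>Z \<subseteq> C(P,L\<^sub>1)\<close> and \<open>\<pi> Z\<close> spans
  \<open>\<pi> C(P,L\<^sub>1)\<close>, every \<open>g \<in> C(P,L\<^sub>1)\<close> can be written \<open>g = (g + z) + z\<close> with \<open>z\<close> in the span of
  \<open>Z\<close> and \<open>\<pi>(g + z) = 0\<close>. So it suffices that the kernel of \<open>\<pi>\<close> on \<open>C(P,L\<^sub>1)\<close> lies in the
  span of \<open>X\<^sub>0\<close> (general linear algebra over \<open>F\<^sub>2\<close>: lemma F2span_lift_through_kernel).

  For the kernel we use coordinates: a line of \<open>L\<^sub>1\<close> is \<open>\<langle>(A,B,1,0),(C,A,0,1)\<rangle>\<close>, and the lines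
  of \<open>X\<^sub>0\<close> are \<open>m\<^sub>b = \<langle>(1,0,0,0),(0,b,1,0)\<rangle>\<close>. Two incidence counts show that every \<open>f\<close> in
  the span of \<open>L\<^sub>1\<close> vanishing on \<open>P\<^sub>1\<close> satisfies \<open>f(a:b:1:0) = f(0:b:1:0)\<close> and
  \<open>\<Sum>\<^sub>b f(0:b:1:0) = 0\<close>; it also vanishes on \<open>\<ell>\<^sub>0\<close> and off the points. Hence \<open>f\<close> is the sum of
  the lines \<open>m\<^sub>b\<close> with \<open>f(0:b:1:0) = 1\<close>. The argument works over every finite field.
\<close>

text \<open>We reason with \<open>+\<close> and \<open>*\<close> on \<open>bit\<close> directly, so the rewriting
  to \<open>xor\<close>/\<open>and\<close> is switched off.\<close>

declare add_bit_eq_xor [simp del] mult_bit_eq_and [simp del]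

lemma bit_cases: "(b::bit) = 0 \<or> b = 1"
  using bit_not_zero_iff by blast

lemma bit_add_self [simp]: "(b::bit) + b = 0"
  using bit_cases[of b] by auto

lemma bit_add_eq_0_iff: "(a::bit) + b = 0 \<longleftrightarrow> a = b"
  using bit_cases[of a] bit_cases[of b] by auto

abbreviation ind :: "bool \<Rightarrow> bit" where "ind P \<equiv> (if P then 1 else 0)"

lemma F2spanI: "finite T \<Longrightarrow> T \<subseteq> A \<Longrightarrow> f = (\<lambda>x. \<Sum>g\<in>T. c g * g x) \<Longrightarrow> f \<in> F2span A"
  unfolding F2span_def by blast

lemma F2span_mono: "A \<subseteq> B \<Longrightarrow> F2span A \<subseteq> F2span B"
  unfolding F2span_def by blast

lemma F2span_base: "g \<in> A \<Longrightarrow> g \<in> F2span A"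
  by (rule F2spanI[of "{g}" _ _ "\<lambda>_. 1"]) auto

lemma F2span_zero: "(\<lambda>x. 0) \<in> F2span A"
  by (rule F2spanI[of "{}"]) auto

lemma F2span_add:
  assumes "f1 \<in> F2span A" "f2 \<in> F2span A"
  shows "(\<lambda>x. f1 x + f2 x) \<in> F2span A"
proof -
  obtain T1 c1 T2 c2 where T: "finite T1" "T1 \<subseteq> A" "f1 = (\<lambda>x. \<Sum>g\<in>T1. c1 g * g x)"
    "finite T2" "T2 \<subseteq> A" "f2 = (\<lambda>x. \<Sum>g\<in>T2. c2 g * g x)"
    using assms unfolding F2span_def by blast
  have extend: "(\<Sum>g\<in>Ti. ci g * g x) = (\<Sum>g\<in>T1 \<union> T2. (if g \<in> Ti then ci g else 0) * g x)"
    if "Ti \<subseteq> T1 \<union> T2" for Ti ci x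
    using T(1,4) that by (intro sum.mono_neutral_cong_left) auto
  define c where "c g = (if g \<in> T1 then c1 g else 0) + (if g \<in> T2 then c2 g else 0)" for g
  have "f1 x + f2 x = (\<Sum>g\<in>T1 \<union> T2. c g * g x)" for x
    unfolding T(3,6) extend[of T1 c1 x, OF Un_upper1] extend[of T2 c2 x, OF Un_upper2]
    by (simp only: c_def distrib_right sum.distrib)
  then show ?thesis using T by (intro F2spanI[where T="T1 \<union> T2" and c=c]) auto
qed

lemma F2span_sum:
  assumes "finite I" "\<And>i. i \<in> I \<Longrightarrow> h i \<in> F2span A"
  shows "(\<lambda>x. \<Sum>i\<in>I. h i x) \<in> F2span A"
  using assms
proof (induction I rule: finite_induct)
  case empty
  then show ?case by (simp add: F2span_zero)
next
  case (insert i I)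
  then have "(\<lambda>x. h i x + (\<Sum>i\<in>I. h i x)) \<in> F2span A"
    by (intro F2span_add) auto
  then show ?case using insert(1,2) by simp
qed

text \<open>Induction principle: the span is contained in every additively closed set of functions
  containing the generators (over \<open>F\<^sub>2\<close> every scalar multiple is \<open>0\<close> or the vector itself).\<close>
lemma F2span_least:
  assumes "(\<lambda>x. 0) \<in> W" "\<And>f g. f \<in> W \<Longrightarrow> g \<in> W \<Longrightarrow> (\<lambda>x. f x + g x) \<in> W" "G \<subseteq> W"
  shows "F2span G \<subseteq> W"
proof
  fix f assume "f \<in> F2span G"
  then obtain T c where T: "finite T" "T \<subseteq> G" "f = (\<lambda>x. \<Sum>g\<in>T. c g * g x)"
    unfolding F2span_def by blast
  have "(\<lambda>x. \<Sum>g\<in>T. c g * g x) \<in> W" using T(1,2)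
  proof (induction T rule: finite_induct)
    case (insert g T)
    have "(\<lambda>x. c g * g x) \<in> W"
      using bit_cases[of "c g"] assms(1,3) insert.prems by auto
    then show ?case using assms(2) insert by simp
  qed (simp add: assms(1))
  then show "f \<in> W" using T(3) by simp
qed

lemma F2span_subspan: "G \<subseteq> F2span H \<Longrightarrow> F2span G \<subseteq> F2span H"
  by (rule F2span_least) (simp_all add: F2span_zero F2span_add)

lemma F2span_annihilator:
  assumes add: "\<And>g h. L (\<lambda>x. g x + h x) = L g + L h"
    and gen: "\<And>g. g \<in> G \<Longrightarrow> L g = (0::bit)" and f: "f \<in> F2span G"
  shows "L f = 0"
proof -
  have "L (\<lambda>x. 0 + 0) = L (\<lambda>x. 0) + L (\<lambda>x. 0)" by (rule add)
  then have zero: "L (\<lambda>x. 0) = 0" by simp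
  have "F2span G \<subseteq> {f. L f = 0}"
    by (rule F2span_least) (simp_all add: zero add gen subset_iff)
  then show ?thesis using f by blast
qed

text \<open>Additive maps between spaces of \<open>F\<^sub>2\<close>-valued functions (over \<open>F\<^sub>2\<close> additivity is
  linearity); restriction of functions to a subset is the example we need.\<close>
definition F2additive :: "(('b \<Rightarrow> bit) \<Rightarrow> ('c \<Rightarrow> bit)) \<Rightarrow> bool" where
  "F2additive \<pi> \<longleftrightarrow> (\<forall>f g. \<pi> (\<lambda>x. f x + g x) = (\<lambda>y. \<pi> f y + \<pi> g y))"

lemma F2additive_zero:
  assumes "F2additive \<pi>" shows "\<pi> (\<lambda>x. 0) = (\<lambda>y. 0)"
  using assms[unfolded F2additive_def, rule_format, of "\<lambda>x. 0" "\<lambda>x. 0"] by simp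

lemma F2span_image:
  assumes "F2additive \<pi>" shows "F2span (\<pi> ` Z) \<subseteq> \<pi> ` F2span Z"
proof (rule F2span_least)
  have "\<pi> (\<lambda>x. 0) \<in> \<pi> ` F2span Z" by (rule imageI[OF F2span_zero])
  then show "(\<lambda>x. 0) \<in> \<pi> ` F2span Z" by (simp add: F2additive_zero[OF assms])
  show "(\<lambda>y. f y + g y) \<in> \<pi> ` F2span Z" if fg: "f \<in> \<pi> ` F2span Z" "g \<in> \<pi> ` F2span Z" for f g
  proof -
    obtain f' g' where "f' \<in> F2span Z" "g' \<in> F2span Z" "f = \<pi> f'" "g = \<pi> g'"
      using fg by blast
    then have "\<pi> (\<lambda>x. f' x + g' x) = (\<lambda>y. f y + g y)" "(\<lambda>x. f' x + g' x) \<in> F2span Z"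
      using assms F2span_add unfolding F2additive_def by auto
    then show ?thesis by (metis imageI)
  qed
  show "\<pi> ` Z \<subseteq> \<pi> ` F2span Z" by (intro image_mono subsetI F2span_base)
qed

text \<open>Lifting through the kernel: let \<open>Z \<subseteq> span S\<close> with \<open>\<pi> (span S) \<subseteq> span (\<pi> ` Z)\<close>, and let the kernel
  of \<open>\<pi>\<close> on \<open>span S\<close> lie in \<open>span X\<close>. Then \<open>span S \<subseteq> span (X \<union> Z)\<close>: write \<open>f = (f + z) + z\<close> with
  \<open>z \<in> span Z\<close>, \<open>\<pi> z = \<pi> f\<close>.\<close>
lemma F2span_lift_through_kernel:
  assumes \<pi>: "F2additive \<pi>"
    and Z: "Z \<subseteq> F2span S" and onto: "\<pi> ` F2span S \<subseteq> F2span (\<pi> ` Z)"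
    and kernel: "\<And>f. f \<in> F2span S \<Longrightarrow> \<pi> f = (\<lambda>y. 0) \<Longrightarrow> f \<in> F2span X"
  shows "F2span S \<subseteq> F2span (X \<union> Z)"
proof
  fix f assume f: "f \<in> F2span S"
  have "\<pi> f \<in> \<pi> ` F2span Z"
    using onto F2span_image[OF \<pi>] imageI[OF f, of \<pi>] by (rule subsetD[OF subset_trans])
  then obtain z where z: "z \<in> F2span Z" "\<pi> z = \<pi> f" by (metis imageE)
  have "z \<in> F2span S" using F2span_subspan[OF Z] z(1) ..
  with f have fz: "(\<lambda>x. f x + z x) \<in> F2span S" by (rule F2span_add)
  have "\<pi> (\<lambda>x. f x + z x) = (\<lambda>y. 0)"
    using \<pi> z(2) unfolding F2additive_def by simp
  then have "(\<lambda>x. f x + z x) \<in> F2span X" by (rule kernel[OF fz])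
  then have "(\<lambda>x. f x + z x) \<in> F2span (X \<union> Z)" using F2span_mono[OF Un_upper1] ..
  moreover have "z \<in> F2span (X \<union> Z)" using F2span_mono[OF Un_upper2] z(1) ..
  ultimately have "(\<lambda>x. (f x + z x) + z x) \<in> F2span (X \<union> Z)" by (rule F2span_add)
  then show "f \<in> F2span (X \<union> Z)" by (simp add: add.assoc)
qed

lemma exhaust4: "(i::4) = 0 \<or> i = 1 \<or> i = 2 \<or> i = 3"
proof (induct i)
  case (of_int z)
  then have "z = 0 \<or> z = 1 \<or> z = 2 \<or> z = 3" by fastforce
  then show ?case by auto
qed

lemma vec4_eq: "(x::'a^4) = y \<longleftrightarrow> x$0 = y$0 \<and> x$1 = y$1 \<and> x$2 = y$2 \<and> x$3 = y$3"
  unfolding vec_eq_iff using exhaust4 by metis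

definition v4 :: "'a \<Rightarrow> 'a \<Rightarrow> 'a \<Rightarrow> 'a \<Rightarrow> 'a^4" where
  "v4 a b c d = (\<chi> i. if i = 0 then a else if i = 1 then b else if i = 2 then c else d)"

lemma v4_nth [simp]:
  "v4 a b c d $ 0 = a" "v4 a b c d $ 1 = b" "v4 a b c d $ 2 = c" "v4 a b c d $ 3 = d"
  by (simp_all add: v4_def)

lemma span1_self: "w \<in> span1 w"
  unfolding span1_def by (rule CollectI, rule exI[of _ 1]) simp

lemma span1_scale:
  assumes "c \<noteq> 0" shows "span1 (c *s w) = span1 w"
proof
  show "span1 (c *s w) \<subseteq> span1 w"
    unfolding span1_def by (auto simp: vector_smult_assoc)
  show "span1 w \<subseteq> span1 (c *s w)"
  proof
    fix x assume "x \<in> span1 w"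
    then obtain d where "x = d *s w" unfolding span1_def by blast
    then have "x = (d / c) *s (c *s w)" using assms by (simp add: vector_smult_assoc)
    then show "x \<in> span1 (c *s w)" unfolding span1_def by blast
  qed
qed

lemma span1_points: "w \<noteq> 0 \<Longrightarrow> span1 w \<in> points"
  unfolding points_def by blast

lemma span1_P1: "w $ 3 \<noteq> 0 \<Longrightarrow> span1 w \<in> P1"
  unfolding P1_def by blast

lemma span1_subset_iff:
  assumes "\<And>x c. x \<in> S \<Longrightarrow> c *s x \<in> S"
  shows "span1 w \<subseteq> S \<longleftrightarrow> w \<in> S"
  using span1_self[of w] assms unfolding span1_def by blast

lemma span2_comb:
  assumes "x \<in> span2 u v" "y \<in> span2 u v"
  shows "a *s x + b *s y \<in> span2 u v"
proof -
  obtain c d e g where "x = c *s u + d *s v" "y = e *s u + g *s v"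
    using assms unfolding span2_def by blast
  then have "a *s x + b *s y = (a*c + b*e) *s u + (a*d + b*g) *s v"
    by (simp add: vec_eq_iff algebra_simps)
  then show ?thesis unfolding span2_def by blast
qed

lemma sform_comb: "sform (a *s u + b *s v) (c *s u + d *s v) = (a*d - b*c) * sform u v"
  unfolding sform_def by simp algebra

lemma line_comb:
  assumes "l \<in> lines" "x \<in> l" "y \<in> l" shows "a *s x + b *s y \<in> l"
  using assms span2_comb unfolding lines_def by blast

lemma line_scale: "l \<in> lines \<Longrightarrow> x \<in> l \<Longrightarrow> c *s x \<in> l"
  using line_comb[of l x x c 0] by simp

lemma line_isotropic:
  assumes "l \<in> lines" "x \<in> l" "y \<in> l" shows "sform x y = 0"
proof -
  obtain u v where l: "l = span2 u v" "sform u v = 0" using assms(1) unfolding lines_def by blast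
  obtain a b c d where "x = a *s u + b *s v" "y = c *s u + d *s v"
    using assms(2,3) unfolding l span2_def by blast
  then show ?thesis by (simp add: sform_comb l(2))
qed

lemma chi_span1:
  assumes "l \<in> lines" "w \<noteq> 0"
  shows "chi l (span1 w) = ind (w \<in> l)"
  using span1_subset_iff[of l w] line_scale[OF assms(1)] span1_points[OF assms(2)]
  unfolding chi_def by auto

lemma chi_nonpoint: "p \<notin> points \<Longrightarrow> chi l p = 0"
  unfolding chi_def by simp

lemma l0_mem: "w \<in> l0 \<longleftrightarrow> w$2 = 0 \<and> w$3 = 0"
proof -
  have e: "ebasis 0 = v4 1 0 0 0" "ebasis 1 = v4 0 1 0 0"
    by (simp_all add: vec4_eq ebasis_def)
  show ?thesis
  proof
    assume "w \<in> l0"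
    then obtain a b where "w = a *s ebasis 0 + b *s ebasis 1" unfolding l0_def span2_def by blast
    then show "w$2 = 0 \<and> w$3 = 0" by (simp add: e)
  next
    assume "w$2 = 0 \<and> w$3 = 0"
    then have "w = w$0 *s ebasis 0 + w$1 *s ebasis 1" by (simp add: e vec4_eq)
    then show "w \<in> l0" unfolding l0_def span2_def by blast
  qed
qed

lemma L1_meets_l0_trivially:
  assumes "l \<in> L1" "w \<in> l" "w$2 = 0" "w$3 = 0"
  shows "w = 0"
proof (rule ccontr)
  assume w: "w \<noteq> 0"
  have l: "l \<in> lines" using assms(1) by (simp add: L1_def)
  have "span1 w \<subseteq> l" using span1_subset_iff[of l w] line_scale[OF l] assms(2) by blast
  moreover have "span1 w \<subseteq> l0" using span1_subset_iff[of l0 w] assms(3,4) by (simp add: l0_mem)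
  ultimately show False using assms(1) span1_points[OF w] unfolding L1_def by blast
qed

text \<open>Hence the projection of a line of \<open>L\<^sub>1\<close> onto the coordinates \<open>(w\<^sub>2, w\<^sub>3)\<close> is bijective;
  in particular the line contains vectors projecting to \<open>(1,0)\<close> and \<open>(0,1)\<close>.\<close>
lemma L1_transversal:
  assumes "l \<in> L1"
  obtains r1 r2 where "r1 \<in> l" "r1$2 = 1" "r1$3 = 0" "r2 \<in> l" "r2$2 = 0" "r2$3 = 1"
proof -
  obtain u v where uv: "l = span2 u v" "lin_indep2 u v"
    using assms unfolding L1_def lines_def by blast
  have comb: "\<And>a b. a *s u + b *s v \<in> l" unfolding uv(1) span2_def by blast
  have indep: "\<And>a b. a *s u + b *s v = 0 \<Longrightarrow> a = 0 \<and> b = 0"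
    using uv(2) unfolding lin_indep2_def by blast
  have trivial: "\<And>a b. (a *s u + b *s v)$2 = 0 \<Longrightarrow> (a *s u + b *s v)$3 = 0 \<Longrightarrow> a = 0 \<and> b = 0"
    using L1_meets_l0_trivially[OF assms comb] indep by blast
  define D where "D = u$2 * v$3 - u$3 * v$2"
  have D: "D \<noteq> 0"
  proof
    assume D0: "D = 0"
    have 3: "v$3 = 0 \<and> u$3 = 0"
      using trivial[of "v$3" "- u$3"] D0 by (auto simp: D_def algebra_simps)
    have 2: "v$2 = 0 \<and> u$2 = 0"
      using trivial[of "- v$2" "u$2"] 3 by (auto simp: algebra_simps)
    show False using trivial[of 1 0] 2 3 by simp
  qed
  show ?thesis
  proof (rule that)
    show "(v$3/D) *s u + (- u$3/D) *s v \<in> l" "(- v$2/D) *s u + (u$2/D) *s v \<in> l"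
      by (rule comb)+
    have "((v$3/D) *s u + (- u$3/D) *s v)$2 = (u$2 * v$3 - u$3 * v$2) / D"
      "((- v$2/D) *s u + (u$2/D) *s v)$3 = (u$2 * v$3 - u$3 * v$2) / D"
      using D by (simp_all add: field_simps)
    then show "((v$3/D) *s u + (- u$3/D) *s v)$2 = 1" "((- v$2/D) *s u + (u$2/D) *s v)$3 = 1"
      using D unfolding D_def by simp_all
    show "((v$3/D) *s u + (- u$3/D) *s v)$3 = 0" "((- v$2/D) *s u + (u$2/D) *s v)$2 = 0"
      using D by (simp_all add: field_simps)
  qed
qed

text \<open>Coordinates of a line of \<open>L\<^sub>1\<close>: it is spanned by \<open>(A,B,1,0)\<close> and \<open>(C,A,0,1)\<close>.\<close>
definition inL :: "'a::field \<Rightarrow> 'a \<Rightarrow> 'a \<Rightarrow> 'a^4 \<Rightarrow> bool" where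
  "inL A B C w \<longleftrightarrow> w$0 = w$2*A + w$3*C \<and> w$1 = w$2*B + w$3*A"

lemma inL_v4: "inL A B C (v4 x y z t) \<longleftrightarrow> x = z*A + t*C \<and> y = z*B + t*A"
  by (simp add: inL_def)

lemma L1_coords:
  assumes "l \<in> L1"
  obtains A B C where "\<And>w. w \<in> l \<longleftrightarrow> inL A B C w"
proof -
  have l: "l \<in> lines" using assms by (simp add: L1_def)
  obtain r1 r2 where r: "r1 \<in> l" "r1$2 = 1" "r1$3 = 0" "r2 \<in> l" "r2$2 = 0" "r2$3 = 1"
    using L1_transversal[OF assms] by blast
  have "sform r1 r2 = 0" by (rule line_isotropic[OF l r(1,4)])
  then have A: "r2$1 = r1$0" using r by (simp add: sform_def)
  have "w \<in> l \<longleftrightarrow> inL (r1$0) (r1$1) (r2$0) w" for w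
  proof
    assume w: "w \<in> l"
    have "(-w$2) *s r1 + (-w$3) *s r2 \<in> l" by (rule line_comb[OF l r(1,4)])
    then have "1 *s w + 1 *s ((-w$2) *s r1 + (-w$3) *s r2) \<in> l" by (rule line_comb[OF l w])
    then have "w + (-w$2) *s r1 + (-w$3) *s r2 = 0"
      by (intro L1_meets_l0_trivially[OF assms]) (simp_all add: r add.assoc)
    then show "inL (r1$0) (r1$1) (r2$0) w" using A unfolding inL_def vec4_eq
      by (simp add: r algebra_simps)
  next
    assume "inL (r1$0) (r1$1) (r2$0) w"
    then have "w = w$2 *s r1 + w$3 *s r2" using r A unfolding inL_def by (simp add: vec4_eq)
    then show "w \<in> l" using line_comb[OF l r(1,4)] by metis
  qed
  then show ?thesis by (rule that)
qed

lemma chi_L1: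
  assumes "l \<in> L1"
  obtains A B C where "\<And>w. w \<noteq> 0 \<Longrightarrow> chi l (span1 w) = ind (inL A B C w)"
proof -
  obtain A B C where "\<And>w. w \<in> l \<longleftrightarrow> inL A B C w" using L1_coords[OF assms] by blast
  moreover have "l \<in> lines" using assms by (simp add: L1_def)
  ultimately show ?thesis using chi_span1 that by metis
qed

definition mline :: "'a::{field,finite} \<Rightarrow> ('a^4) set" where
  "mline b = span2 (v4 1 0 0 0) (v4 0 b 1 0)"

lemma mline_mem: "w \<in> mline b \<longleftrightarrow> w$3 = 0 \<and> w$1 = b * w$2"
proof
  assume "w \<in> mline b"
  then obtain a c where "w = a *s v4 1 0 0 0 + c *s v4 0 b 1 0" unfolding mline_def span2_def by blast
  then show "w$3 = 0 \<and> w$1 = b * w$2" by (simp add: mult.commute)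
next
  assume "w$3 = 0 \<and> w$1 = b * w$2"
  then have "w = w$0 *s v4 1 0 0 0 + w$2 *s v4 0 b 1 0" by (simp add: vec4_eq mult.commute)
  then show "w \<in> mline b" unfolding mline_def span2_def by blast
qed

lemma mline_lines: "mline b \<in> lines"
proof -
  have "lin_indep2 (v4 1 0 0 0) (v4 0 b 1 0)"
    unfolding lin_indep2_def
  proof (intro allI impI)
    fix a c :: 'a assume "a *s v4 1 0 0 0 + c *s v4 0 b 1 0 = 0"
    then have "(a *s v4 1 0 0 0 + c *s v4 0 b 1 0)$0 = 0" "(a *s v4 1 0 0 0 + c *s v4 0 b 1 0)$2 = 0"
      by simp_all
    then show "a = 0 \<and> c = 0" by simp
  qed
  moreover have "sform (v4 1 0 0 0) (v4 0 b 1 0) = 0" by (simp add: sform_def)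
  ultimately show ?thesis unfolding lines_def mline_def by blast
qed

lemma mline_X0: "mline b \<in> X0"
proof -
  have "\<And>x c. x \<in> mline b \<Longrightarrow> c *s x \<in> mline b" by (rule line_scale[OF mline_lines])
  then have "p0 \<subseteq> mline b \<longleftrightarrow> ebasis 0 \<in> mline b"
    unfolding p0_def by (rule span1_subset_iff)
  moreover have "ebasis 0 \<in> mline b" by (simp add: mline_mem ebasis_def)
  ultimately have "p0 \<subseteq> mline b" by simp
  moreover have "v4 0 b 1 0 \<in> mline b" "v4 0 b 1 0 \<notin> l0" by (simp_all add: mline_mem l0_mem)
  ultimately show ?thesis using mline_lines unfolding X0_def by blast
qed

lemma chi_mline: "w \<noteq> 0 \<Longrightarrow> chi (mline b) (span1 w) = ind (w$3 = 0 \<and> w$1 = b * w$2)"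
  by (subst mline_mem[symmetric]) (rule chi_span1[OF mline_lines])

lemma sum_ind_unique:
  assumes "\<And>x. P x \<longleftrightarrow> x = g \<and> Q"
  shows "(\<Sum>x\<in>(UNIV::'b::finite set). ind (P x)) = ind Q"
proof -
  have "(\<Sum>x\<in>(UNIV::'b set). ind (P x)) = (\<Sum>x\<in>UNIV. if x = g then ind Q else 0)"
    using assms by (intro sum.cong) auto
  also have "\<dots> = ind Q" by (simp add: sum.delta)
  finally show ?thesis .
qed

lemma v4_nonzero [simp]: "v4 a b c (1::'a::field) \<noteq> 0" "v4 a b (1::'a::field) d \<noteq> 0"
  by (simp_all add: vec4_eq)

lemma bit_ind_twice: "ind P + ind Q + ind P + ind Q = 0"
  by (cases P; cases Q) simp_all

text \<open>Incidence count behind the slope invariance of the kernel: for \<open>a \<noteq> 0\<close>, every line of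
  \<open>L\<^sub>1\<close> meets the union of the lines \<open>\<langle>(a,b,1,0),(0,0,0,1)\<rangle>\<close> and \<open>\<langle>(0,b,1,0),(0,a,0,1)\<rangle>\<close>
  in an even number of points (the sums run over the affine parts, the last two terms are the
  points at infinity \<open>(a:b:1:0)\<close> and \<open>(0:b:1:0)\<close>).\<close>

text \<open>Case \<open>B = b\<close>: the first line is met iff \<open>A = 0\<close>, the second iff \<open>A = a\<close>; each count is
  attained once in an affine part and once at infinity.\<close>
lemma L1_incidence_slope_same:
  fixes A C a b :: "'a::{field,finite}"
  assumes a: "a \<noteq> 0"
  shows "(\<Sum>\<gamma>\<in>UNIV. ind (inL A b C (v4 (\<gamma>*a) (\<gamma>*b) \<gamma> 1)))
       + (\<Sum>\<gamma>\<in>UNIV. ind (inL A b C (v4 0 (a + \<gamma>*b) \<gamma> 1)))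
       + ind (inL A b C (v4 0 b 1 0)) + ind (inL A b C (v4 a b 1 0)) = 0"
proof -
  have s1: "(\<Sum>\<gamma>\<in>UNIV. ind (inL A b C (v4 (\<gamma>*a) (\<gamma>*b) \<gamma> 1))) = ind (A = 0)"
  proof (rule sum_ind_unique)
    fix \<gamma>
    show "inL A b C (v4 (\<gamma>*a) (\<gamma>*b) \<gamma> 1) \<longleftrightarrow> \<gamma> = C/a \<and> A = 0"
      using a by (auto simp: inL_v4 field_simps)
  qed
  have s2: "(\<Sum>\<gamma>\<in>UNIV. ind (inL A b C (v4 0 (a + \<gamma>*b) \<gamma> 1))) = ind (A = a)"
  proof (rule sum_ind_unique)
    fix \<gamma>
    show "inL A b C (v4 0 (a + \<gamma>*b) \<gamma> 1) \<longleftrightarrow> \<gamma> = - C/a \<and> A = a"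
      using a by (auto simp: inL_v4 field_simps eq_neg_iff_add_eq_0 add.commute)
  qed
  have x: "inL A b C (v4 0 b 1 0) \<longleftrightarrow> A = 0" by (auto simp: inL_v4)
  have y: "inL A b C (v4 a b 1 0) \<longleftrightarrow> A = a" by (auto simp: inL_v4)
  show ?thesis unfolding s1 s2 x y by (rule bit_ind_twice)
qed

text \<open>The case \<open>B \<noteq> b\<close>: each of the two affine parts is met in one point iff \<open>C = A(a - A)/(b - B)\<close>,
  and the points at infinity are not met.\<close>
lemma L1_incidence_slope_other:
  fixes A B C a b :: "'a::{field,finite}"
  assumes a: "a \<noteq> 0" and slope: "B \<noteq> b"
  shows "(\<Sum>\<gamma>\<in>UNIV. ind (inL A B C (v4 (\<gamma>*a) (\<gamma>*b) \<gamma> 1)))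
       + (\<Sum>\<gamma>\<in>UNIV. ind (inL A B C (v4 0 (a + \<gamma>*b) \<gamma> 1)))
       + ind (inL A B C (v4 0 b 1 0)) + ind (inL A B C (v4 a b 1 0)) = 0"
proof -
  define d where "d = b - B"
  have d: "d \<noteq> 0" using slope unfolding d_def by simp
  define Q where "Q = (C = A * (a - A) / d)"
  have s1: "(\<Sum>\<gamma>\<in>UNIV. ind (inL A B C (v4 (\<gamma>*a) (\<gamma>*b) \<gamma> 1))) = ind Q"
  proof (rule sum_ind_unique)
    fix \<gamma>
    have e: "\<gamma>*b = \<gamma>*B + A \<longleftrightarrow> \<gamma> = A/d" using d unfolding d_def by (auto simp: field_simps)
    have "inL A B C (v4 (\<gamma>*a) (\<gamma>*b) \<gamma> 1) \<longleftrightarrow> (\<gamma> = A/d \<and> \<gamma>*a = \<gamma>*A + C)"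
      using e by (auto simp: inL_v4)
    also have "\<dots> \<longleftrightarrow> \<gamma> = A/d \<and> Q"
    proof (cases "\<gamma> = A/d")
      case True
      have "\<gamma>*a = \<gamma>*A + C \<longleftrightarrow> C = \<gamma>*(a - A)" by (auto simp: algebra_simps)
      moreover have "\<gamma>*(a - A) = A*(a-A)/d" using True by simp
      ultimately show ?thesis unfolding Q_def using True by simp
    qed simp
    finally show "inL A B C (v4 (\<gamma>*a) (\<gamma>*b) \<gamma> 1) \<longleftrightarrow> \<gamma> = A/d \<and> Q" .
  qed
  have s2: "(\<Sum>\<gamma>\<in>UNIV. ind (inL A B C (v4 0 (a + \<gamma>*b) \<gamma> 1))) = ind Q"
  proof (rule sum_ind_unique)
    fix \<gamma>
    have e: "a + \<gamma>*b = \<gamma>*B + A \<longleftrightarrow> \<gamma> = (A - a)/d" using d unfolding d_def by (auto simp: field_simps)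
    have "inL A B C (v4 0 (a + \<gamma>*b) \<gamma> 1) \<longleftrightarrow> (\<gamma> = (A - a)/d \<and> 0 = \<gamma>*A + C)"
      using e by (auto simp: inL_v4)
    also have "\<dots> \<longleftrightarrow> \<gamma> = (A - a)/d \<and> Q"
    proof (cases "\<gamma> = (A - a)/d")
      case True
      have "0 = \<gamma>*A + C \<longleftrightarrow> C = -(\<gamma>*A)" by (metis add.commute eq_neg_iff_add_eq_0)
      moreover have "-(\<gamma>*A) = A*(a-A)/d"
      proof -
        have "-(\<gamma>*A) = -((A - a)/d * A)" using True by simp
        also have "\<dots> = A*(a-A)/d" using d by (simp add: field_simps)
        finally show ?thesis .
      qed
      ultimately show ?thesis unfolding Q_def using True by simp
    qed simp
    finally show "inL A B C (v4 0 (a + \<gamma>*b) \<gamma> 1) \<longleftrightarrow> \<gamma> = (A - a)/d \<and> Q" .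
  qed
  have x: "\<not> inL A B C (v4 0 b 1 0)" using slope by (auto simp: inL_v4)
  have y: "\<not> inL A B C (v4 a b 1 0)" using slope by (auto simp: inL_v4)
  show ?thesis unfolding s1 s2 using x y by simp
qed

lemma L1_incidence_slope:
  fixes A B C a b :: "'a::{field,finite}"
  assumes a: "a \<noteq> 0"
  shows "(\<Sum>\<gamma>\<in>UNIV. ind (inL A B C (v4 (\<gamma>*a) (\<gamma>*b) \<gamma> 1)))
       + (\<Sum>\<gamma>\<in>UNIV. ind (inL A B C (v4 0 (a + \<gamma>*b) \<gamma> 1)))
       + ind (inL A B C (v4 0 b 1 0)) + ind (inL A B C (v4 a b 1 0)) = 0"
  using L1_incidence_slope_same[OF a] L1_incidence_slope_other[OF a] by (cases "B = b") auto

text \<open>Incidence count behind the parity of the kernel: every line of \<open>L\<^sub>1\<close> meets each of the lines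
  \<open>\<langle>e\<^sub>0,e\<^sub>3\<rangle>\<close> and \<open>\<langle>e\<^sub>1,e\<^sub>2\<rangle>\<close> (outside \<open>\<ell>\<^sub>0\<close>) iff \<open>A = 0\<close>, so in an even number of points altogether.\<close>
lemma L1_incidence_even:
  fixes A B C :: "'a::{field,finite}"
  shows "(\<Sum>\<alpha>\<in>UNIV. ind (inL A B C (v4 \<alpha> 0 0 1))) + (\<Sum>b\<in>UNIV. ind (inL A B C (v4 0 b 1 0))) = 0"
proof -
  have "(\<Sum>\<alpha>\<in>UNIV. ind (inL A B C (v4 \<alpha> 0 0 1))) = ind (A = 0)"
    by (rule sum_ind_unique[where g=C]) (auto simp: inL_v4)
  moreover have "(\<Sum>b\<in>UNIV. ind (inL A B C (v4 0 b 1 0))) = ind (A = 0)"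
    by (rule sum_ind_unique[where g=B]) (auto simp: inL_v4)
  ultimately show ?thesis by simp
qed

context
  fixes f :: "('a::{field,finite}^4) set \<Rightarrow> bit"
  assumes f_span: "f \<in> F2span (chi ` L1)" and f_P1: "piP1 f = (\<lambda>_. 0)"
begin

text \<open>\<open>f\<close> vanishes on \<open>P\<^sub>1\<close> by assumption, and off the points and on \<open>\<ell>\<^sub>0\<close> because every line
  of \<open>L\<^sub>1\<close> does.\<close>
lemma kernel_P1: "w$3 \<noteq> 0 \<Longrightarrow> f (span1 w) = 0"
  using fun_cong[OF f_P1, of "span1 w"] span1_P1[of w] by (simp add: piP1_def)

lemma kernel_nonpoint: "p \<notin> points \<Longrightarrow> f p = 0"
  by (rule F2span_annihilator[OF _ _ f_span, where L="\<lambda>g. g p"]) (auto simp: chi_nonpoint)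

lemma kernel_l0:
  assumes "w \<noteq> 0" "w$2 = 0" "w$3 = 0" shows "f (span1 w) = 0"
proof (rule F2span_annihilator[OF _ _ f_span, where L="\<lambda>g. g (span1 w)"])
  fix g assume "g \<in> chi ` (L1 :: ('a^4) set set)"
  then obtain l where l: "l \<in> L1" "g = chi l" by blast
  have "w \<notin> l" using L1_meets_l0_trivially[OF l(1) _ assms(2,3)] assms(1) by blast
  moreover have "l \<in> lines" using l(1) by (simp add: L1_def)
  ultimately show "g (span1 w) = 0" using chi_span1[OF _ assms(1)] l(2) by simp
qed simp

lemma kernel_slope: "f (span1 (v4 a b 1 0)) = f (span1 (v4 0 b 1 0))"
proof (cases "a = 0")
  case False
  define L where "L g = (\<Sum>\<gamma>\<in>UNIV. g (span1 (v4 (\<gamma>*a) (\<gamma>*b) \<gamma> 1)))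
      + (\<Sum>\<gamma>\<in>UNIV. g (span1 (v4 0 (a + \<gamma>*b) \<gamma> 1)))
      + g (span1 (v4 0 b 1 0)) + g (span1 (v4 a b 1 0))" for g :: "('a^4) set \<Rightarrow> bit"
  have "L f = 0"
  proof (rule F2span_annihilator[OF _ _ f_span])
    show "L (\<lambda>x. g x + h x) = L g + L h" for g h
      unfolding L_def by (simp add: sum.distrib ac_simps)
    fix g assume "g \<in> chi ` (L1 :: ('a^4) set set)"
    then obtain l where l: "l \<in> L1" "g = chi l" by blast
    obtain A B C where "\<And>w. w \<noteq> 0 \<Longrightarrow> chi l (span1 w) = ind (inL A B C w)"
      using chi_L1[OF l(1)] by blast
    then show "L g = 0" unfolding L_def l(2) using L1_incidence_slope[OF False] by simp
  qed
  then show ?thesis unfolding L_def by (simp add: kernel_P1 bit_add_eq_0_iff)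
qed simp

lemma kernel_even: "(\<Sum>b\<in>UNIV. f (span1 (v4 0 b 1 0))) = 0"
proof -
  define L where "L g = (\<Sum>\<alpha>\<in>UNIV. g (span1 (v4 \<alpha> 0 0 1)))
      + (\<Sum>b\<in>UNIV. g (span1 (v4 0 b 1 0)))" for g :: "('a^4) set \<Rightarrow> bit"
  have "L f = 0"
  proof (rule F2span_annihilator[OF _ _ f_span])
    show "L (\<lambda>x. g x + h x) = L g + L h" for g h
      unfolding L_def by (simp add: sum.distrib ac_simps)
    fix g assume "g \<in> chi ` (L1 :: ('a^4) set set)"
    then obtain l where l: "l \<in> L1" "g = chi l" by blast
    obtain A B C where "\<And>w. w \<noteq> 0 \<Longrightarrow> chi l (span1 w) = ind (inL A B C w)"
      using chi_L1[OF l(1)] by blast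
    then show "L g = 0" unfolding L_def l(2) using L1_incidence_even by simp
  qed
  then show ?thesis unfolding L_def by (simp add: kernel_P1)
qed

text \<open>Consequently \<open>f\<close> is the sum of the lines \<open>m\<^sub>b\<close> over the slopes \<open>b\<close> with \<open>f (0:b:1:0) = 1\<close>;
  on \<open>\<ell>\<^sub>0\<close> both sides vanish because the number of such slopes is even.\<close>
lemma kernel_decomposition:
  "f = (\<lambda>x. \<Sum>b\<in>{b. f (span1 (v4 0 b 1 0)) = 1}. chi (mline b) x)" (is "f = (\<lambda>x. \<Sum>b\<in>?B. _)")
proof
  have "(\<Sum>b\<in>?B. (1::bit)) = (\<Sum>b\<in>?B. f (span1 (v4 0 b 1 0)))" by simp
  also have "\<dots> = (\<Sum>b\<in>UNIV. f (span1 (v4 0 b 1 0)))"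
    using bit_cases by (intro sum.mono_neutral_left) auto
  finally have parity: "(\<Sum>b\<in>?B. (1::bit)) = 0" by (simp add: kernel_even)
  fix p
  show "f p = (\<Sum>b\<in>?B. chi (mline b) p)"
  proof (cases "p \<in> points")
    case False
    then show ?thesis by (simp add: kernel_nonpoint chi_nonpoint)
  next
    case True
    then obtain w :: "'a^4" where w: "w \<noteq> 0" "p = span1 w" unfolding points_def by blast
    have R: "(\<Sum>b\<in>?B. chi (mline b) p) = (\<Sum>b\<in>?B. ind (w$3 = 0 \<and> w$1 = b * w$2))"
      unfolding w(2) by (intro sum.cong refl chi_mline[OF w(1)])
    consider "w$3 \<noteq> 0" | "w$3 = 0" "w$2 = 0" | "w$3 = 0" "w$2 \<noteq> 0" by blast
    then show ?thesis
    proof cases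
      case 1
      then show ?thesis unfolding R by (simp add: w(2) kernel_P1)
    next
      case 2
      then show ?thesis unfolding R using w(2) parity kernel_l0[OF w(1)] by (cases "w$1 = 0") simp_all
    next
      case 3
      have "(1 / w$2) *s w = v4 (w$0 / w$2) (w$1 / w$2) 1 0" using 3 by (simp add: vec4_eq)
      then have "p = span1 (v4 (w$0 / w$2) (w$1 / w$2) 1 0)"
        using w(2) span1_scale[of "1 / w$2" w] 3 by simp
      then have "f p = f (span1 (v4 (w$0 / w$2) (w$1 / w$2) 1 0))" by simp
      also have "\<dots> = f (span1 (v4 0 (w$1 / w$2) 1 0))" by (rule kernel_slope)
      also have "\<dots> = ind (w$1 / w$2 \<in> ?B)" using bit_cases by auto
      also have "\<dots> = (\<Sum>b\<in>?B. if b = w$1 / w$2 then 1 else 0)" by (simp add: sum.delta')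
      also have "\<dots> = (\<Sum>b\<in>?B. ind (w$3 = 0 \<and> w$1 = b * w$2))"
        using 3 by (intro sum.cong) (auto simp: field_simps)
      finally show ?thesis unfolding R .
    qed
  qed
qed

end

lemma restriction_kernel:
  assumes "f \<in> F2span (chi ` L1)" "piP1 f = (\<lambda>_. 0)"
  shows "f \<in> F2span (chi ` X0)"
proof -
  have "(\<lambda>x. \<Sum>b\<in>{b. f (span1 (v4 0 b 1 0)) = 1}. chi (mline b) x) \<in> F2span (chi ` X0)"
    by (intro F2span_sum F2span_base imageI mline_X0) simp
  then show ?thesis using kernel_decomposition[OF assms] by simp
qed

lemma F2additive_piP1: "F2additive piP1"
  unfolding F2additive_def piP1_def by auto

theorem corollary14:
  fixes t :: nat and Z :: "(('a::{field,finite} ^ 4) set \<Rightarrow> bit) set"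
  assumes "CARD('a) = 2 ^ t"
    and "Z \<subseteq> chi ` (L1 :: ('a ^ 4) set set)"
    and "inj_on piP1 Z"
    and "F2basis (piP1 ` Z) (CP1L1 :: (('a ^ 4) set \<Rightarrow> bit) set)"
  shows "F2span (chi ` (X0 :: ('a ^ 4) set set) \<union> Z) = F2span (chi ` (X0 \<union> L1))"
proof
  show "F2span (chi ` X0 \<union> Z) \<subseteq> F2span (chi ` (X0 \<union> L1))"
    using assms(2) by (intro F2span_mono) auto
  have Z: "Z \<subseteq> F2span (chi ` L1)"
    by (rule subset_trans[OF assms(2)]) (rule subsetI, rule F2span_base)
  have onto: "piP1 ` F2span (chi ` L1) \<subseteq> F2span (piP1 ` Z)"
    using assms(4) unfolding F2basis_def CP1L1_def by simp
  have "F2span (chi ` L1) \<subseteq> F2span (chi ` X0 \<union> Z)"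
    by (rule F2span_lift_through_kernel[OF F2additive_piP1 Z onto restriction_kernel])
  then have "chi ` L1 \<subseteq> F2span (chi ` X0 \<union> Z)"
    by (rule subset_trans[rotated]) (rule subsetI, rule F2span_base)
  moreover have "chi ` X0 \<subseteq> F2span (chi ` X0 \<union> Z)" by (rule subsetI, rule F2span_base) simp
  ultimately show "F2span (chi ` (X0 \<union> L1)) \<subseteq> F2span (chi ` X0 \<union> Z)"
    by (intro F2span_subspan) (simp add: image_Un)
qed

end
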